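(* (Stability.) Let $1\le m\le n$, $x=(x_1,\dots,x_m)$, $y=(y_1,\dots,y_n)$, and write $x^{(m)}=(x_1,\dots,x_{m-1})$, $y^{(n)}=(y_1,\dots,y_{n-1})$. Then \[F(u;x,y;t)\big|_{x_my_n=1}=F(u;x^{(m)},y^{(n)};t)\quad\text{and}\quad F(u;x,y;t)\big|_{x_m=y_n=0}=(1-u)F(ut;x^{(m)},y^{(n)};t).\]
   Context: For $x=(x_1,\dots,x_m)$, $y=(y_1,\dots,y_n)$, \[F(u;x,y;t)=\sum_{I\subseteq\{1,\dots,m\}}(-u)^{|I|}t^{\binom{|I|}{2}}\prod_{i\in I,\ j\in\{1,\dots,m\}\setminus I}\frac{tx_i-x_j}{x_i-x_j}\prod_{i\in I}\prod_{j=1}^n\frac{1-x_iy_j}{1-tx_iy_j}.\] *)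

theory Defs
  imports Complex_Main
begin

(* F(u; x_1..x_m, y_1..y_n; t), variables evaluated pointwise in a field;
   x and y are indexed from 1, only x 1..x m and y 1..y n are used. *)
definition F :: "'a::field \<Rightarrow> (nat \<Rightarrow> 'a) \<Rightarrow> nat \<Rightarrow> (nat \<Rightarrow> 'a) \<Rightarrow> nat \<Rightarrow> 'a \<Rightarrow> 'a" where
  "F u x m y n t =
     (\<Sum>I\<in>Pow {1..m}. (-u) ^ card I * t ^ (card I choose 2)
        * (\<Prod>i\<in>I. \<Prod>j\<in>{1..m} - I. (t * x i - x j) / (x i - x j))
        * (\<Prod>i\<in>I. \<Prod>j\<in>{1..n}. (1 - x i * y j) / (1 - t * x i * y j)))"

end

theory Submission
  imports Defs
begin

(* Split the sum over I \<subseteq> {1..m} according to whether m \<in> I, and compare each half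
   with F for the shortened alphabets.  If x_m y_n = 1, every term with m \<in> I contains
   the factor 1 - x_m y_n = 0, while for m \<notin> I the two new factors
   (t x_i - x_m)/(x_i - x_m) and (1 - x_i y_n)/(1 - t x_i y_n) are mutually inverse.
   If x_m = y_n = 0, a term with m \<notin> I picks up exactly t^|I|, which turns u into ut;
   a term with m \<in> I is, up to the factor -u, the term of J = I - {m} in F(ut),
   because binom(|J|+1, 2) = binom(|J|, 2) + |J|. *)

definition F_cross :: "'a::field \<Rightarrow> (nat \<Rightarrow> 'a) \<Rightarrow> nat \<Rightarrow> nat set \<Rightarrow> 'a" where
  "F_cross t x m I = (\<Prod>i\<in>I. \<Prod>j\<in>{1..m} - I. (t * x i - x j) / (x i - x j))"

definition F_cauchy :: "'a::field \<Rightarrow> (nat \<Rightarrow> 'a) \<Rightarrow> (nat \<Rightarrow> 'a) \<Rightarrow> nat \<Rightarrow> nat set \<Rightarrow> 'a" where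
  "F_cauchy t x y n I = (\<Prod>i\<in>I. \<Prod>j\<in>{1..n}. (1 - x i * y j) / (1 - t * x i * y j))"

definition F_term ::
    "'a::field \<Rightarrow> (nat \<Rightarrow> 'a) \<Rightarrow> nat \<Rightarrow> (nat \<Rightarrow> 'a) \<Rightarrow> nat \<Rightarrow> 'a \<Rightarrow> nat set \<Rightarrow> 'a" where
  "F_term u x m y n t I =
     (-u) ^ card I * t ^ (card I choose 2) * F_cross t x m I * F_cauchy t x y n I"

lemma F_eq_sum_F_term: "F u x m y n t = (\<Sum>I\<in>Pow {1..m}. F_term u x m y n t I)"
  by (simp add: F_def F_term_def F_cross_def F_cauchy_def)

lemma sum_Pow_insert:
  assumes "finite A" and "a \<notin> A"
  shows "(\<Sum>I\<in>Pow (insert a A). g I) = (\<Sum>I\<in>Pow A. g I) + (\<Sum>J\<in>Pow A. g (insert a J))"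
proof -
  have "inj_on (insert a) (Pow A)"
    using assms(2) by (intro inj_onI) (metis PowD Diff_insert_absorb in_mono)
  moreover have "Pow A \<inter> insert a ` Pow A = {}"
    using assms(2) by auto
  ultimately show ?thesis
    using assms(1) by (simp add: Pow_insert sum.union_disjoint sum.reindex)
qed

lemma F_eq_sum_Suc:
  "F u x (Suc k) y n t =
     (\<Sum>I\<in>Pow {1..k}. F_term u x (Suc k) y n t I)
   + (\<Sum>J\<in>Pow {1..k}. F_term u x (Suc k) y n t (insert (Suc k) J))"
  by (simp add: F_eq_sum_F_term atLeastAtMostSuc_conv sum_Pow_insert)

lemma F_cross_Suc:
  assumes "I \<subseteq> {1..k}"
  shows "F_cross t x (Suc k) I
       = F_cross t x k I * (\<Prod>i\<in>I. (t * x i - x (Suc k)) / (x i - x (Suc k)))"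
proof -
  have "{1..Suc k} - I = insert (Suc k) ({1..k} - I)" and "Suc k \<notin> {1..k} - I"
    using assms by auto
  then show ?thesis
    by (simp add: F_cross_def mult.commute flip: prod.distrib)
qed

lemma F_cross_Suc_insert:
  assumes "J \<subseteq> {1..k}"
  shows "F_cross t x (Suc k) (insert (Suc k) J)
       = (\<Prod>j\<in>{1..k} - J. (t * x (Suc k) - x j) / (x (Suc k) - x j)) * F_cross t x k J"
proof -
  have "{1..Suc k} - insert (Suc k) J = {1..k} - J" and "Suc k \<notin> J" and "finite J"
    using assms finite_subset by auto
  then show ?thesis
    by (simp add: F_cross_def)
qed

lemma F_cauchy_Suc:
  "F_cauchy t x y (Suc l) I
     = F_cauchy t x y l I * (\<Prod>i\<in>I. (1 - x i * y (Suc l)) / (1 - t * x i * y (Suc l)))"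
  by (simp del: times_divide_eq_left
      add: F_cauchy_def atLeastAtMostSuc_conv mult.commute flip: prod.distrib)

lemma F_cauchy_insert:
  assumes "finite J" and "a \<notin> J"
  shows "F_cauchy t x y n (insert a J)
       = (\<Prod>j\<in>{1..n}. (1 - x a * y j) / (1 - t * x a * y j)) * F_cauchy t x y n J"
  using assms by (simp add: F_cauchy_def)

lemma reciprocal_factors_cancel:
  fixes a b c t :: "'a::field"
  assumes "b * c = 1" and "a \<noteq> b" and "1 - t * a * c \<noteq> 0"
  shows "(t * a - b) / (a - b) * ((1 - a * c) / (1 - t * a * c)) = 1"
proof -
  have ac: "1 - a * c = (b - a) * c" and tac: "1 - t * a * c = (b - t * a) * c"
    using assms(1) by (simp_all add: algebra_simps)
  have "c \<noteq> 0" and "b - t * a \<noteq> 0"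
    using assms(3) unfolding tac by auto
  moreover have "(t * a - b) / (a - b) = (b - t * a) / (b - a)"
    by (metis minus_diff_eq minus_divide_divide)
  ultimately show ?thesis
    using assms(2) unfolding ac tac by simp
qed

lemma F_specialize_reciprocal:
  assumes "inj_on x {1..Suc k}" and "x (Suc k) * y (Suc l) = 1"
    and "\<forall>i\<in>{1..k}. 1 - t * x i * y (Suc l) \<noteq> 0"
  shows "F u x (Suc k) y (Suc l) t = F u x k y l t"
proof -
  have vanish: "F_term u x (Suc k) y (Suc l) t (insert (Suc k) J) = 0" if "J \<subseteq> {1..k}" for J
  proof -
    have J: "finite J" "Suc k \<notin> J"
      using that finite_subset by auto
    have "(\<Prod>j\<in>{1..Suc l}. (1 - x (Suc k) * y j) / (1 - t * x (Suc k) * y j)) = 0"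
      using assms(2) by (intro prod_zero) auto
    then have "F_cauchy t x y (Suc l) (insert (Suc k) J) = 0"
      by (simp only: F_cauchy_insert[OF J] mult_zero_left)
    then show ?thesis
      by (simp add: F_term_def)
  qed
  have keep: "F_term u x (Suc k) y (Suc l) t I = F_term u x k y l t I" if "I \<subseteq> {1..k}" for I
  proof -
    have "(\<Prod>i\<in>I. (t * x i - x (Suc k)) / (x i - x (Suc k)))
        * (\<Prod>i\<in>I. (1 - x i * y (Suc l)) / (1 - t * x i * y (Suc l))) = 1"
      unfolding prod.distrib[symmetric]
    proof (intro prod.neutral ballI reciprocal_factors_cancel)
      fix i assume "i \<in> I"
      with that have i: "i \<in> {1..k}"
        by blast
      show "x i \<noteq> x (Suc k)"
        using inj_onD[OF assms(1)] i by fastforce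
      show "1 - t * x i * y (Suc l) \<noteq> 0"
        using assms(3) i by blast
    qed (use assms(2) in simp)
    moreover have "F_term u x (Suc k) y (Suc l) t I = F_term u x k y l t I *
        ((\<Prod>i\<in>I. (t * x i - x (Suc k)) / (x i - x (Suc k)))
        * (\<Prod>i\<in>I. (1 - x i * y (Suc l)) / (1 - t * x i * y (Suc l))))"
      by (simp add: F_term_def F_cross_Suc[OF that] F_cauchy_Suc mult_ac)
    ultimately show ?thesis
      by simp
  qed
  show ?thesis
    by (simp add: F_eq_sum_Suc F_eq_sum_F_term[of u x k] keep vanish)
qed

lemma F_specialize_zero:
  assumes "inj_on x {1..Suc k}" and "x (Suc k) = 0" and "y (Suc l) = 0"
  shows "F u x (Suc k) y (Suc l) t = (1 - u) * F (u * t) x k y l t"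
proof -
  have x_nonzero: "x i \<noteq> 0" if "i \<in> {1..k}" for i
  proof
    assume "x i = 0"
    then have "i = Suc k"
      using assms(2) that by (intro inj_onD[OF assms(1)]) auto
    with that show False
      by simp
  qed
  have keep: "F_term u x (Suc k) y (Suc l) t I = F_term (u * t) x k y l t I"
    if "I \<subseteq> {1..k}" for I
  proof -
    have "(\<Prod>i\<in>I. (t * x i - x (Suc k)) / (x i - x (Suc k))) = t ^ card I"
      using that x_nonzero assms(2) by (simp add: subset_iff)
    then show ?thesis
      using assms(3)
      by (simp add: F_term_def F_cross_Suc[OF that] F_cauchy_Suc
          power_mult_distrib minus_mult_right mult_ac del: mult_minus_right)
  qed
  have shift: "F_term u x (Suc k) y (Suc l) t (insert (Suc k) J) = - u * F_term (u * t) x k y l t J"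
    if "J \<subseteq> {1..k}" for J
  proof -
    have "finite J" and "Suc k \<notin> J"
      using that finite_subset by auto
    moreover have "(\<Prod>j\<in>{1..k} - J. (t * x (Suc k) - x j) / (x (Suc k) - x j)) = 1"
      using x_nonzero assms(2) by (intro prod.neutral) auto
    moreover have "Suc c choose 2 = (c choose 2) + c" for c
      by (simp add: numeral_2_eq_2)
    ultimately show ?thesis
      using assms(2,3)
      by (simp add: F_term_def F_cross_Suc_insert[OF that] F_cauchy_insert F_cauchy_Suc
          power_add power_mult_distrib minus_mult_right mult_ac del: mult_minus_right)
  qed
  have "F u x (Suc k) y (Suc l) t = F (u * t) x k y l t - u * F (u * t) x k y l t"
    by (simp add: F_eq_sum_Suc F_eq_sum_F_term[of "u * t" x k] keep shift sum_distrib_left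
        sum_negf)
  then show ?thesis
    by (simp add: algebra_simps)
qed

theorem lemma3p1:
  fixes u t :: "'a::field_char_0" and x y :: "nat \<Rightarrow> 'a" and m n :: nat
  assumes "1 \<le> m" and "m \<le> n"
    and "inj_on x {1..m}"
    and "\<forall>i\<in>{1..m}. \<forall>j\<in>{1..n}. 1 - t * x i * y j \<noteq> 0"
  shows "(x m * y n = 1 \<longrightarrow> F u x m y n t = F u x (m - 1) y (n - 1) t)
       \<and> (x m = 0 \<and> y n = 0 \<longrightarrow> F u x m y n t = (1 - u) * F (u * t) x (m - 1) y (n - 1) t)"
proof -
  obtain k where m: "m = Suc k"
    using assms(1) by (cases m) auto
  obtain l where n: "n = Suc l"
    using assms(1,2) by (cases n) auto
  have "\<forall>i\<in>{1..k}. 1 - t * x i * y (Suc l) \<noteq> 0"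
    using assms(4) unfolding m n by auto
  then show ?thesis
    using F_specialize_reciprocal[of x k y l t u] F_specialize_zero[of x k y l u t] assms(3)
    unfolding m n by (simp only: diff_Suc_1) blast
qed

end
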